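(* Let $S\subset\mathcal P$ be a rectangular lattice and let $\Delta$ be a bounded region of $\mathcal L_S$ which does not contain the origin $O$ of $\mathbb{R}^2$, with $n$ sides and sign sequence $D_k$, $k\in\mathbb{Z}/n\mathbb{Z}$, as in the context. Then there is no $k$ with $D_k=D_{k+1}=D_{k+2}$.
   Context: $\mathcal P=\mathbb{R}^2\setminus\{(0,0)\}$; for $P=(A,B)\in\mathcal P$, $L_P$ is the line $Ax+By=1$ in $\mathbb{R}^2$; $\mathcal L_S=\{L_P\mid P\in S\}$. A rectangular lattice is a set of the form $S=\{(a+k\delta_x,\,b+j\delta_y)\mid k,j\in\mathbb{Z},\ 0\le k\le N,\ 0\le j\le M\}\setminus\{(0,0)\}$, where $(a,b)\ne(0,0)$, $\delta_x,\delta_y>0$, $N,M\in\mathbb{Z}_{\ge0}$, and the corners $(a,b+M\delta_y)$, $(a+N\delta_x,b)$, $(a+N\delta_x,b+M\delta_y)$ are all different from $(0,0)$. Regions of $\mathcal L_S$ are closures of connected components of $\mathbb{R}^2\setminus\bigcup_{P\in S}L_P$. For a bounded region $\Delta$ with $n$ sides, $L_k$ ($k\in\mathbb{Z}/n\mathbb{Z}$) are the lines containing the sides of $\Delta$ in clockwise order around $\Delta$, and $D_k\in\{l,r\}$ is the side (left or right) of $L_k$ on which $O$ lies for a traveller moving along the side of $\Delta$ on $L_k$ clockwise around $\Delta$ (with $\Delta$ on the traveller's right). *)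

theory Defs
  imports "HOL-Analysis.Analysis"
begin

definition line_of :: "real \<times> real \<Rightarrow> (real \<times> real) set" where
  "line_of P = {q. fst P * fst q + snd P * snd q = 1}"

definition rect_lattice :: "(real \<times> real) set \<Rightarrow> bool" where
  "rect_lattice S \<longleftrightarrow> (\<exists>a b dx dy (N::nat) (M::nat).
      (a, b) \<noteq> (0, 0) \<and> dx > 0 \<and> dy > 0 \<and>
      (a, b + real M * dy) \<noteq> (0, 0) \<and>
      (a + real N * dx, b) \<noteq> (0, 0) \<and>
      (a + real N * dx, b + real M * dy) \<noteq> (0, 0) \<and>
      S = {(a + real k * dx, b + real j * dy) | k j. k \<le> N \<and> j \<le> M} - {(0, 0)})"

definition region_of :: "(real \<times> real) set \<Rightarrow> (real \<times> real) set \<Rightarrow> bool" where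
  "region_of S \<Delta> \<longleftrightarrow> (\<exists>z. z \<notin> (\<Union>P\<in>S. line_of P) \<and>
      \<Delta> = closure (connected_component_set (- (\<Union>P\<in>S. line_of P)) z))"

text \<open>cross u w > 0 iff w points to the left of u (counterclockwise).\<close>
definition cross2 :: "real \<times> real \<Rightarrow> real \<times> real \<Rightarrow> real" where
  "cross2 u w = fst u * snd w - snd u * fst w"

text \<open>Side k of \<Delta> is then the segment [v k, v (k+1)], traversed clockwise with \<Delta> on the right.\<close>
definition clockwise_vertices :: "(real \<times> real) set \<Rightarrow> nat \<Rightarrow> (nat \<Rightarrow> real \<times> real) \<Rightarrow> bool" where
  "clockwise_vertices \<Delta> n v \<longleftrightarrow> n \<ge> 3 \<and>
      \<Delta> = convex hull (v ` {..<n}) \<and>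
      (\<forall>k<n. \<forall>j<n. j \<noteq> k \<and> j \<noteq> (k + 1) mod n \<longrightarrow>
          cross2 (v ((k + 1) mod n) - v k) (v j - v k) < 0)"

datatype lr = l | r

text \<open>D_k: the side (left/right) of L_k on which O lies, for a traveller moving along
  side k from v k to v (k+1) (i.e. clockwise around \<Delta>).\<close>
definition side_D :: "nat \<Rightarrow> (nat \<Rightarrow> real \<times> real) \<Rightarrow> nat \<Rightarrow> lr" where
  "side_D n v k = (let a = v (k mod n); b = v ((k + 1) mod n) in
      if cross2 (b - a) ((0, 0) - a) > 0 then l else r)"

end

theory Submission
  imports Defs
begin

(* Suppose O lies on the same side of the lines L_P0, L_P1, L_P2 (P0, P1, P2 \<in> S) carrying three
   consecutive sides of \<Delta>. Write the points of S as P1 + \<delta>, with \<delta> ranging over the integer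
   offsets in a box of the lattice; the box contains 0, \<alpha> = P0 - P1 and \<gamma> = P2 - P1. No line L_Q
   crosses \<Delta>, so Q \<bullet> x - 1 has a common sign at the four vertices on these sides; these values
   are affine in \<delta>, which forces \<delta> into the closed cone spanned by \<alpha> and \<gamma> or into the
   opposite open cone. If the box met the opposite cone, it would also contain a lattice point in
   neither cone (on a coordinate axis, or built coordinatewise from \<alpha> and \<gamma>). Hence all offsets
   lie in the closed cone, and every Q \<bullet> x - 1 has on \<Delta> the sign of P1 \<bullet> x - 1. If that sign is
   positive, \<Delta> contains the unbounded set of all x with Q \<bullet> x > 1 for every Q \<in> S; if it is
   negative, \<Delta> contains O. *)

section \<open>Integer points of a box in a lattice cone\<close>

definition det2 :: "int \<times> int \<Rightarrow> int \<times> int \<Rightarrow> int" where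
  "det2 p q = fst p * snd q - snd p * fst q"

lemma det2_both_zero:
  assumes "det2 \<gamma> \<alpha> \<noteq> 0" "det2 \<gamma> \<delta> = 0" "det2 \<delta> \<alpha> = 0"
  shows "\<delta> = 0"
proof -
  obtain i j a b c e where pairs: "\<delta> = (i, j)" "\<alpha> = (a, b)" "\<gamma> = (c, e)" by (metis prod.exhaust)
  have "det2 \<gamma> \<alpha> * i = det2 \<gamma> \<delta> * a + det2 \<delta> \<alpha> * c"
    "det2 \<gamma> \<alpha> * j = det2 \<gamma> \<delta> * b + det2 \<delta> \<alpha> * e"
    unfolding pairs det2_def by (simp_all add: algebra_simps)
  then show ?thesis using assms pairs by (simp add: zero_prod_def)
qed

lemma same_sign_transfer:
  fixes x y p q :: int
  assumes "x * y < 0" "x * p < 0 \<longleftrightarrow> x * q < 0" "y * p < 0 \<longleftrightarrow> y * q < 0" "p \<noteq> 0 \<or> q \<noteq> 0"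
  shows "0 < p * q"
  using assms by (auto simp: mult_less_0_iff zero_less_mult_iff)

lemma opposite_signs_of_common_factor:
  fixes p q z :: int
  assumes "0 < p * z" "q * z < 0"
  shows "p * q < 0"
  using assms by (auto simp: zero_less_mult_iff mult_less_0_iff)

lemma opposite_quadrants_corner_sign:
  fixes a b c e :: int
  assumes ac: "a * c < 0" and be: "b * e < 0" and D: "det2 (c, e) (a, b) \<noteq> 0"
  defines "w \<equiv> (if \<bar>a\<bar> \<le> \<bar>c\<bar> then a else - c, if \<bar>b\<bar> \<le> \<bar>e\<bar> then b else - e)"
  shows "det2 (c, e) w * det2 w (a, b) \<le> 0 \<and> (det2 (c, e) w \<noteq> 0 \<or> det2 w (a, b) \<noteq> 0)"
proof (cases "\<bar>a\<bar> \<le> \<bar>c\<bar>"; cases "\<bar>b\<bar> \<le> \<bar>e\<bar>")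
  assume "\<bar>a\<bar> \<le> \<bar>c\<bar>" "\<bar>b\<bar> \<le> \<bar>e\<bar>"
  then show ?thesis using D unfolding w_def det2_def by simp
next
  assume "\<not> \<bar>a\<bar> \<le> \<bar>c\<bar>" "\<not> \<bar>b\<bar> \<le> \<bar>e\<bar>"
  then show ?thesis using D unfolding w_def det2_def by (simp add: algebra_simps)
next
  assume *: "\<bar>a\<bar> \<le> \<bar>c\<bar>" "\<not> \<bar>b\<bar> \<le> \<bar>e\<bar>"
  have "a * (a + c) \<le> 0" "e * (b + e) \<le> 0" "a \<noteq> 0" "b + e \<noteq> 0"
    using * ac be by (auto simp: mult_less_0_iff mult_le_0_iff)
  then have "0 \<le> (a * (a + c)) * (e * (b + e))" "a * (b + e) \<noteq> 0"
    by (simp_all add: mult_nonpos_nonpos)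
  moreover have eq: "det2 (c, e) w * det2 w (a, b) = - ((a * (a + c)) * (e * (b + e)))"
    "det2 w (a, b) = a * (b + e)"
    using * unfolding w_def det2_def by (simp_all add: algebra_simps)
  ultimately show ?thesis unfolding eq(1) unfolding eq(2) by simp
next
  assume *: "\<not> \<bar>a\<bar> \<le> \<bar>c\<bar>" "\<bar>b\<bar> \<le> \<bar>e\<bar>"
  have "c * (a + c) \<le> 0" "b * (b + e) \<le> 0" "b \<noteq> 0" "a + c \<noteq> 0"
    using * ac be by (auto simp: mult_less_0_iff mult_le_0_iff)
  then have "0 \<le> (c * (a + c)) * (b * (b + e))" "b * (a + c) \<noteq> 0"
    by (simp_all add: mult_nonpos_nonpos)
  moreover have eq: "det2 (c, e) w * det2 w (a, b) = - ((c * (a + c)) * (b * (b + e)))"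
    "det2 w (a, b) = - (b * (a + c))"
    using * unfolding w_def det2_def by (simp_all add: algebra_simps)
  ultimately show ?thesis unfolding eq(1) unfolding eq(2) by simp
qed

lemma opposite_quadrants_witness:
  fixes \<alpha> \<gamma> :: "int \<times> int"
  assumes D: "det2 \<gamma> \<alpha> \<noteq> 0"
    and opp: "fst \<alpha> * fst \<gamma> < 0" "snd \<alpha> * snd \<gamma> < 0"
    and box: "0 \<in> {la..ha} \<times> {lb..hb}" "\<alpha> \<in> {la..ha} \<times> {lb..hb}" "\<gamma> \<in> {la..ha} \<times> {lb..hb}"
  obtains w where "w \<in> {la..ha} \<times> {lb..hb}" "- w \<in> {la..ha} \<times> {lb..hb}"
    "det2 \<gamma> w * det2 w \<alpha> \<le> 0" "det2 \<gamma> w \<noteq> 0 \<or> det2 w \<alpha> \<noteq> 0"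
proof -
  obtain a b c e where pairs: "\<alpha> = (a, b)" "\<gamma> = (c, e)" by fastforce
  define w where "w = (if \<bar>a\<bar> \<le> \<bar>c\<bar> then a else - c, if \<bar>b\<bar> \<le> \<bar>e\<bar> then b else - e)"
  have ac: "a * c < 0" and be: "b * e < 0" using opp pairs by simp_all
  have "la \<le> 0" "0 \<le> ha" "lb \<le> 0" "0 \<le> hb" "la \<le> a" "a \<le> ha" "la \<le> c" "c \<le> ha"
      "lb \<le> b" "b \<le> hb" "lb \<le> e" "e \<le> hb"
    using box pairs by (auto simp: zero_prod_def)
  then have mem: "w \<in> {la..ha} \<times> {lb..hb}" "- w \<in> {la..ha} \<times> {lb..hb}"
    using ac be unfolding w_def by (auto simp: mult_less_0_iff)
  have "det2 \<gamma> w * det2 w \<alpha> \<le> 0 \<and> (det2 \<gamma> w \<noteq> 0 \<or> det2 w \<alpha> \<noteq> 0)"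
    using opposite_quadrants_corner_sign[OF ac be] D unfolding pairs w_def by blast
  then show ?thesis using that[OF mem] by blast
qed

text \<open>The products \<open>det2 \<gamma> \<delta> * det2 \<gamma> \<alpha>\<close> and \<open>det2 \<delta> \<alpha> * det2 \<gamma> \<alpha>\<close> are \<open>(det2 \<gamma> \<alpha>)\<^sup>2\<close> times
  the coordinates of \<open>\<delta>\<close> in the basis \<open>\<alpha>, \<gamma>\<close>.\<close>

locale lattice_box_cone =
  fixes \<alpha> \<gamma> :: "int \<times> int" and la ha lb hb :: int
  assumes det_nonzero: "det2 \<gamma> \<alpha> \<noteq> 0"
    and in_box: "0 \<in> {la..ha} \<times> {lb..hb}" "\<alpha> \<in> {la..ha} \<times> {lb..hb}" "\<gamma> \<in> {la..ha} \<times> {lb..hb}"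
    and dichotomy: "\<And>\<delta>. \<delta> \<in> {la..ha} \<times> {lb..hb} \<Longrightarrow>
      (0 \<le> det2 \<gamma> \<delta> * det2 \<gamma> \<alpha> \<and> 0 \<le> det2 \<delta> \<alpha> * det2 \<gamma> \<alpha>) \<or>
      (det2 \<gamma> \<delta> * det2 \<gamma> \<alpha> < 0 \<and> det2 \<delta> \<alpha> * det2 \<gamma> \<alpha> < 0)"
begin

lemma dichotomy_iff:
  assumes "la \<le> i" "i \<le> ha" "lb \<le> j" "j \<le> hb"
  shows "det2 \<gamma> (i, j) * det2 \<gamma> \<alpha> < 0 \<longleftrightarrow> det2 (i, j) \<alpha> * det2 \<gamma> \<alpha> < 0"
  using dichotomy[of "(i, j)"] assms by auto

lemma not_opposite_quadrants: "\<not> (fst \<alpha> * fst \<gamma> < 0 \<and> snd \<alpha> * snd \<gamma> < 0)"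
proof
  assume opp: "fst \<alpha> * fst \<gamma> < 0 \<and> snd \<alpha> * snd \<gamma> < 0"
  obtain w where w: "w \<in> {la..ha} \<times> {lb..hb}" "- w \<in> {la..ha} \<times> {lb..hb}"
      "det2 \<gamma> w * det2 w \<alpha> \<le> 0" "det2 \<gamma> w \<noteq> 0 \<or> det2 w \<alpha> \<noteq> 0"
    by (rule opposite_quadrants_witness[OF det_nonzero conjunct1[OF opp] conjunct2[OF opp] in_box])
  have "det2 \<gamma> (- w) = - det2 \<gamma> w" "det2 (- w) \<alpha> = - det2 w \<alpha>"
    unfolding det2_def by simp_all
  then show False
    using dichotomy[OF w(1)] dichotomy[OF w(2)] w(3,4) det_nonzero
    by (auto simp: mult_less_0_iff zero_le_mult_iff mult_le_0_iff)
qed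

lemma fst_axis_nonneg:
  assumes "la \<le> i" "i \<le> ha"
  shows "0 \<le> det2 \<gamma> (i, 0) * det2 \<gamma> \<alpha>"
proof (rule ccontr)
  obtain a b c e where pairs: "\<alpha> = (a, b)" "\<gamma> = (c, e)" by fastforce
  define D where "D = det2 \<gamma> \<alpha>"
  have box: "la \<le> 0" "0 \<le> ha" "lb \<le> 0" "0 \<le> hb" "lb \<le> b" "b \<le> hb" "lb \<le> e" "e \<le> hb"
    using in_box pairs by (auto simp: zero_prod_def)
  have "D \<noteq> 0" "c \<noteq> 0 \<or> a \<noteq> 0" using det_nonzero unfolding D_def pairs det2_def by auto
  assume "\<not> 0 \<le> det2 \<gamma> (i, 0) * det2 \<gamma> \<alpha>"
  then have "det2 \<gamma> (i, 0) * D < 0" unfolding D_def by simp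
  then have "0 < e * (i * D)" "b * (i * D) < 0"
    using dichotomy_iff[of i 0, folded D_def] assms box unfolding pairs det2_def by (simp_all add: mult_ac)
  then have "e * b < 0"
    by (rule opposite_signs_of_common_factor)
  moreover have "0 < (c * D) * (- a * D)"
  proof (rule same_sign_transfer)
    show "e * b < 0" by fact
    show "e * (c * D) < 0 \<longleftrightarrow> e * (- a * D) < 0" "b * (c * D) < 0 \<longleftrightarrow> b * (- a * D) < 0"
      using dichotomy_iff[of 0 e, folded D_def] dichotomy_iff[of 0 b, folded D_def] box
      unfolding pairs det2_def by (simp_all add: mult_ac)
    show "c * D \<noteq> 0 \<or> - a * D \<noteq> 0" using \<open>D \<noteq> 0\<close> \<open>c \<noteq> 0 \<or> a \<noteq> 0\<close> by simp
  qed
  then have "a * c < 0" by (auto simp: zero_less_mult_iff mult_less_0_iff)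
  ultimately show False using not_opposite_quadrants pairs by (simp add: mult.commute)
qed

lemma snd_axis_nonneg:
  assumes "lb \<le> j" "j \<le> hb"
  shows "0 \<le> det2 \<gamma> (0, j) * det2 \<gamma> \<alpha>"
proof (rule ccontr)
  obtain a b c e where pairs: "\<alpha> = (a, b)" "\<gamma> = (c, e)" by fastforce
  define D where "D = det2 \<gamma> \<alpha>"
  have box: "la \<le> 0" "0 \<le> ha" "lb \<le> 0" "0 \<le> hb" "la \<le> a" "a \<le> ha" "la \<le> c" "c \<le> ha"
    using in_box pairs by (auto simp: zero_prod_def)
  have "D \<noteq> 0" "e \<noteq> 0 \<or> b \<noteq> 0" using det_nonzero unfolding D_def pairs det2_def by auto
  assume "\<not> 0 \<le> det2 \<gamma> (0, j) * det2 \<gamma> \<alpha>"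
  then have "det2 \<gamma> (0, j) * D < 0" unfolding D_def by simp
  then have "0 < a * (j * D)" "c * (j * D) < 0"
    using dichotomy_iff[of 0 j, folded D_def] assms box unfolding pairs det2_def by (simp_all add: mult_ac)
  then have "a * c < 0"
    by (rule opposite_signs_of_common_factor)
  moreover have "0 < (- e * D) * (b * D)"
  proof (rule same_sign_transfer)
    show "c * a < 0" using \<open>a * c < 0\<close> by (simp add: mult.commute)
    show "c * (- e * D) < 0 \<longleftrightarrow> c * (b * D) < 0" "a * (- e * D) < 0 \<longleftrightarrow> a * (b * D) < 0"
      using dichotomy_iff[of c 0, folded D_def] dichotomy_iff[of a 0, folded D_def] box
      unfolding pairs det2_def by (simp_all add: mult_ac)
    show "- e * D \<noteq> 0 \<or> b * D \<noteq> 0" using \<open>D \<noteq> 0\<close> \<open>e \<noteq> 0 \<or> b \<noteq> 0\<close> by simp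
  qed
  then have "b * e < 0" by (auto simp: zero_less_mult_iff mult_less_0_iff)
  ultimately show False using not_opposite_quadrants pairs by simp
qed

lemma in_cone:
  assumes "\<delta> \<in> {la..ha} \<times> {lb..hb}"
  shows "0 \<le> det2 \<gamma> \<delta> * det2 \<gamma> \<alpha> \<and> 0 \<le> det2 \<delta> \<alpha> * det2 \<gamma> \<alpha>"
proof -
  obtain i j where \<delta>: "\<delta> = (i, j)" by fastforce
  have "det2 \<gamma> (i, j) * det2 \<gamma> \<alpha> = det2 \<gamma> (i, 0) * det2 \<gamma> \<alpha> + det2 \<gamma> (0, j) * det2 \<gamma> \<alpha>"
    unfolding det2_def by (simp add: algebra_simps)
  then have "0 \<le> det2 \<gamma> \<delta> * det2 \<gamma> \<alpha>"
    using fst_axis_nonneg[of i] snd_axis_nonneg[of j] assms unfolding \<delta> by simp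
  then show ?thesis using dichotomy[OF assms] by linarith
qed

end

section \<open>Lines through a box of lattice points\<close>

lemma scaled_sign:
  fixes c k f t :: real
  assumes "0 < c" "0 < k" "c * f = t * k"
  shows "0 < f \<longleftrightarrow> 0 < t" "f < 0 \<longleftrightarrow> t < 0"
proof -
  have "0 < f \<longleftrightarrow> 0 < c * f" "f < 0 \<longleftrightarrow> c * f < 0" "0 < t \<longleftrightarrow> 0 < t * k" "t < 0 \<longleftrightarrow> t * k < 0"
    using assms(1,2) by (simp_all add: zero_less_mult_iff mult_less_0_iff)
  then show "0 < f \<longleftrightarrow> 0 < t" "f < 0 \<longleftrightarrow> t < 0" using assms(3) by simp_all
qed

lemma pivot_values_dichotomy:
  fixes D X Y fk fu fw ft K U W L :: real
  assumes D: "D \<noteq> 0" and pos: "0 < K" "0 < U" "0 < W" "0 < L"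
    and fu: "D * fu = Y * U" and fw: "D * fw = X * W"
    and fk: "Y = 0 \<Longrightarrow> D * fk = (D - X) * K" and ft: "X = 0 \<Longrightarrow> D * ft = (D - Y) * L"
    and same_side: "(0 \<le> fk \<and> 0 \<le> fu \<and> 0 \<le> fw \<and> 0 \<le> ft) \<or> (fk \<le> 0 \<and> fu \<le> 0 \<and> fw \<le> 0 \<and> ft \<le> 0)"
  shows "(0 \<le> X * D \<and> 0 \<le> Y * D) \<or> (X * D < 0 \<and> Y * D < 0)"
proof -
  have sq: "0 < D * D" using D by (auto simp: zero_less_mult_iff linorder_neq_iff)
  have "(D * D) * fu = (Y * D) * U" "(D * D) * fw = (X * D) * W"
    using fu fw by (simp_all add: algebra_simps)
  then have u: "0 < fu \<longleftrightarrow> 0 < Y * D" "fu < 0 \<longleftrightarrow> Y * D < 0"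
    and w: "0 < fw \<longleftrightarrow> 0 < X * D" "fw < 0 \<longleftrightarrow> X * D < 0"
    using scaled_sign[OF sq pos(2)] scaled_sign[OF sq pos(3)] by blast+
  show ?thesis
  proof (rule ccontr)
    assume "\<not> ?thesis"
    then consider "0 \<le> X * D" "Y * D < 0" | "X * D < 0" "0 \<le> Y * D" by linarith
    then show False
    proof cases
      case 1
      then have "X = 0" using same_side u w D by (auto simp: not_less)
      then have "D * (D * ft) = D * ((D - Y) * L)" using ft by simp
      then have "(D * D) * ft = (D * D - Y * D) * L" by (simp add: algebra_simps)
      then have "0 < ft \<longleftrightarrow> 0 < D * D - Y * D" by (rule scaled_sign(1)[OF sq pos(4)])
      then have "0 < ft" using 1 sq by linarith
      then show False using same_side u 1 by linarith
    next
      case 2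
      then have "Y = 0" using same_side u w D by (auto simp: not_less)
      then have "D * (D * fk) = D * ((D - X) * K)" using fk by simp
      then have "(D * D) * fk = (D * D - X * D) * K" by (simp add: algebra_simps)
      then have "0 < fk \<longleftrightarrow> 0 < D * D - X * D" by (rule scaled_sign(1)[OF sq pos(1)])
      then have "0 < fk" using 2 sq by linarith
      then show False using same_side w 2 by linarith
    qed
  qed
qed

lemma pivot_values_positive:
  fixes D X Y fu fw U W :: real
  assumes D: "D \<noteq> 0" and pos: "0 < U" "0 < W"
    and fu: "D * fu = Y * U" and fw: "D * fw = X * W"
    and cone: "0 \<le> X * D" "0 \<le> Y * D" and nz: "X \<noteq> 0 \<or> Y \<noteq> 0"
  shows "0 < fu \<or> 0 < fw"
proof -
  have sq: "0 < D * D" using D by (auto simp: zero_less_mult_iff linorder_neq_iff)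
  have "(D * D) * fu = (Y * D) * U" "(D * D) * fw = (X * D) * W"
    using fu fw by (simp_all add: algebra_simps)
  then have "0 < fu \<longleftrightarrow> 0 < Y * D" "0 < fw \<longleftrightarrow> 0 < X * D"
    using scaled_sign(1)[OF sq pos(1)] scaled_sign(1)[OF sq pos(2)] by blast+
  moreover have "X * D \<noteq> 0 \<or> Y * D \<noteq> 0" using nz D by simp
  ultimately show ?thesis using cone by linarith
qed

definition lattice_vec :: "real \<Rightarrow> real \<Rightarrow> int \<times> int \<Rightarrow> real \<times> real" where
  "lattice_vec dx dy \<delta> = (of_int (fst \<delta>) * dx, of_int (snd \<delta>) * dy)"

definition lattice_affine :: "(int \<times> int \<Rightarrow> real) \<Rightarrow> bool" where
  "lattice_affine f \<longleftrightarrow> (\<exists>c A B. \<forall>i j. f (i, j) = c + of_int i * A + of_int j * B)"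

lemma lattice_affine_line: "lattice_affine (\<lambda>\<delta>. \<sigma> * (inner (p + lattice_vec dx dy \<delta>) x - 1))"
  unfolding lattice_affine_def lattice_vec_def
  by (rule exI[of _ "\<sigma> * (inner p x - 1)"], rule exI[of _ "\<sigma> * dx * fst x"],
      rule exI[of _ "\<sigma> * dy * snd x"]) (simp add: inner_add_left inner_prod_def algebra_simps)

text \<open>By Cramer's rule \<open>det2 \<gamma> \<alpha> \<cdot> \<delta> = det2 \<gamma> \<delta> \<cdot> \<alpha> + det2 \<delta> \<alpha> \<cdot> \<gamma>\<close>.\<close>

lemma lattice_affine_barycentric:
  assumes "lattice_affine f"
  shows "of_int (det2 \<gamma> \<alpha>) * f \<delta> =
    of_int (det2 \<gamma> \<alpha> - det2 \<gamma> \<delta> - det2 \<delta> \<alpha>) * f 0 + of_int (det2 \<gamma> \<delta>) * f \<alpha> + of_int (det2 \<delta> \<alpha>) * f \<gamma>"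
proof -
  obtain c A B where f: "\<And>i j. f (i, j) = c + of_int i * A + of_int j * B"
    using assms unfolding lattice_affine_def by blast
  obtain i j a b c' e where "\<delta> = (i, j)" "\<alpha> = (a, b)" "\<gamma> = (c', e)" by (metis prod.exhaust)
  then show ?thesis by (simp add: f zero_prod_def det2_def algebra_simps)
qed

text \<open>\<open>fk, fu, fw, ft\<close> are the signed values \<open>\<sigma> (Q \<bullet> x - 1)\<close> at four consecutive vertices,
  as functions of the offset \<open>\<delta>\<close> of the lattice point \<open>Q\<close> from the one whose line carries the
  middle side; \<open>\<alpha>\<close> and \<open>\<gamma>\<close> are the offsets for the two neighbouring sides.\<close>

locale pivot_lines =
  fixes \<alpha> \<gamma> :: "int \<times> int" and fk fu fw ft :: "int \<times> int \<Rightarrow> real"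
  assumes affine: "lattice_affine fk" "lattice_affine fu" "lattice_affine fw" "lattice_affine ft"
    and on_lines: "fk \<alpha> = 0" "fu \<alpha> = 0" "fu 0 = 0" "fw 0 = 0" "fw \<gamma> = 0" "ft \<gamma> = 0"
    and beyond: "0 < fk 0" "0 < fu \<gamma>" "0 < fw \<alpha>" "0 < ft 0"
begin

lemma fu_eq: "of_int (det2 \<gamma> \<alpha>) * fu \<delta> = of_int (det2 \<delta> \<alpha>) * fu \<gamma>"
  using lattice_affine_barycentric[OF affine(2), of \<gamma> \<alpha> \<delta>] on_lines by simp

lemma fw_eq: "of_int (det2 \<gamma> \<alpha>) * fw \<delta> = of_int (det2 \<gamma> \<delta>) * fw \<alpha>"
  using lattice_affine_barycentric[OF affine(3), of \<gamma> \<alpha> \<delta>] on_lines by simp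

lemma det_nonzero: "det2 \<gamma> \<alpha> \<noteq> 0"
proof
  assume "det2 \<gamma> \<alpha> = 0"
  then have "det2 \<delta> \<alpha> = 0" for \<delta> using fu_eq[of \<delta>] beyond(2) by simp
  from this[of "(1, 0)"] this[of "(0, 1)"] have "\<alpha> = 0"
    unfolding det2_def by (simp add: prod_eq_iff)
  then show False using on_lines(4) beyond(3) by simp
qed

lemma dichotomy:
  assumes "(0 \<le> fk \<delta> \<and> 0 \<le> fu \<delta> \<and> 0 \<le> fw \<delta> \<and> 0 \<le> ft \<delta>) \<or> (fk \<delta> \<le> 0 \<and> fu \<delta> \<le> 0 \<and> fw \<delta> \<le> 0 \<and> ft \<delta> \<le> 0)"
  shows "(0 \<le> det2 \<gamma> \<delta> * det2 \<gamma> \<alpha> \<and> 0 \<le> det2 \<delta> \<alpha> * det2 \<gamma> \<alpha>) \<or>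
    (det2 \<gamma> \<delta> * det2 \<gamma> \<alpha> < 0 \<and> det2 \<delta> \<alpha> * det2 \<gamma> \<alpha> < 0)"
proof -
  have "(0 \<le> real_of_int (det2 \<gamma> \<delta>) * of_int (det2 \<gamma> \<alpha>) \<and> 0 \<le> real_of_int (det2 \<delta> \<alpha>) * of_int (det2 \<gamma> \<alpha>)) \<or>
      (real_of_int (det2 \<gamma> \<delta>) * of_int (det2 \<gamma> \<alpha>) < 0 \<and> real_of_int (det2 \<delta> \<alpha>) * of_int (det2 \<gamma> \<alpha>) < 0)"
  proof (rule pivot_values_dichotomy[OF _ beyond fu_eq fw_eq _ _ assms])
    show "real_of_int (det2 \<gamma> \<alpha>) \<noteq> 0" using det_nonzero by simp
    show "of_int (det2 \<gamma> \<alpha>) * fk \<delta> = (of_int (det2 \<gamma> \<alpha>) - of_int (det2 \<gamma> \<delta>)) * fk 0"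
      if "real_of_int (det2 \<delta> \<alpha>) = 0"
      using lattice_affine_barycentric[OF affine(1), of \<gamma> \<alpha> \<delta>] on_lines that by (simp add: algebra_simps)
    show "of_int (det2 \<gamma> \<alpha>) * ft \<delta> = (of_int (det2 \<gamma> \<alpha>) - of_int (det2 \<delta> \<alpha>)) * ft 0"
      if "real_of_int (det2 \<gamma> \<delta>) = 0"
      using lattice_affine_barycentric[OF affine(4), of \<gamma> \<alpha> \<delta>] on_lines that by (simp add: algebra_simps)
  qed
  then show ?thesis by (simp only: of_int_mult[symmetric] of_int_0_le_iff of_int_less_0_iff)
qed

lemma positive_off_pivot:
  assumes "\<delta> \<noteq> 0" "0 \<le> det2 \<gamma> \<delta> * det2 \<gamma> \<alpha>" "0 \<le> det2 \<delta> \<alpha> * det2 \<gamma> \<alpha>"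
  shows "0 < fu \<delta> \<or> 0 < fw \<delta>"
proof (rule pivot_values_positive[OF _ beyond(2,3) fu_eq fw_eq])
  show "real_of_int (det2 \<gamma> \<alpha>) \<noteq> 0" using det_nonzero by simp
  show "0 \<le> real_of_int (det2 \<gamma> \<delta>) * of_int (det2 \<gamma> \<alpha>)" "0 \<le> real_of_int (det2 \<delta> \<alpha>) * of_int (det2 \<gamma> \<alpha>)"
    using assms(2,3) by (simp_all only: of_int_mult[symmetric] of_int_0_le_iff)
  show "real_of_int (det2 \<gamma> \<delta>) \<noteq> 0 \<or> real_of_int (det2 \<delta> \<alpha>) \<noteq> 0"
    using det2_both_zero[of \<gamma> \<alpha> \<delta>] det_nonzero assms(1) by auto
qed

end

lemma one_sided_spread:
  fixes f :: "'a \<Rightarrow> real"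
  assumes "(\<forall>y\<in>A. 1 \<le> f y) \<or> (\<forall>y\<in>A. f y \<le> 1)" "x \<in> A" "0 < \<sigma> * (f x - 1)"
  shows "\<forall>y\<in>A. 0 \<le> \<sigma> * (f y - 1)"
  using assms by (fastforce simp: zero_less_mult_iff zero_le_mult_iff)

lemma lattice_lines_one_sided:
  fixes p vk u w vt :: "real \<times> real" and dx dy \<sigma> :: real and \<alpha> \<gamma> :: "int \<times> int"
  defines "Q \<equiv> \<lambda>\<delta>. p + lattice_vec dx dy \<delta>"
  assumes box: "0 \<in> {la..ha} \<times> {lb..hb}" "\<alpha> \<in> {la..ha} \<times> {lb..hb}" "\<gamma> \<in> {la..ha} \<times> {lb..hb}"
    and one_sided: "\<forall>\<delta>\<in>{la..ha} \<times> {lb..hb}. (\<forall>y\<in>\<Delta>. 1 \<le> inner (Q \<delta>) y) \<or> (\<forall>y\<in>\<Delta>. inner (Q \<delta>) y \<le> 1)"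
    and vertices: "vk \<in> \<Delta>" "u \<in> \<Delta>" "w \<in> \<Delta>" "vt \<in> \<Delta>"
    and through: "inner (Q \<alpha>) vk = 1" "inner (Q \<alpha>) u = 1" "inner p u = 1" "inner p w = 1"
      "inner (Q \<gamma>) w = 1" "inner (Q \<gamma>) vt = 1"
    and beyond: "0 < \<sigma> * (inner p vk - 1)" "0 < \<sigma> * (inner (Q \<gamma>) u - 1)"
      "0 < \<sigma> * (inner (Q \<alpha>) w - 1)" "0 < \<sigma> * (inner p vt - 1)"
  shows "\<forall>\<delta>\<in>{la..ha} \<times> {lb..hb}. \<forall>y\<in>\<Delta>. 0 \<le> \<sigma> * (inner (Q \<delta>) y - 1)"
proof -
  define F where "F x \<delta> = \<sigma> * (inner (Q \<delta>) x - 1)" for x \<delta>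
  have Q0: "Q 0 = p" unfolding Q_def lattice_vec_def by (simp add: zero_prod_def)
  have affine: "lattice_affine (F x)" for x
    unfolding F_def[abs_def] Q_def by (rule lattice_affine_line)
  interpret P: pivot_lines \<alpha> \<gamma> "F vk" "F u" "F w" "F vt"
    by unfold_locales (use affine through beyond Q0 in \<open>simp_all add: F_def\<close>)
  interpret C: lattice_box_cone \<alpha> \<gamma> la ha lb hb
  proof unfold_locales
    fix \<delta> assume "\<delta> \<in> {la..ha} \<times> {lb..hb}"
    then have "(\<forall>y\<in>\<Delta>. 1 \<le> inner (Q \<delta>) y) \<or> (\<forall>y\<in>\<Delta>. inner (Q \<delta>) y \<le> 1)"
      by (rule bspec[OF one_sided])
    then have "(0 \<le> F vk \<delta> \<and> 0 \<le> F u \<delta> \<and> 0 \<le> F w \<delta> \<and> 0 \<le> F vt \<delta>) \<or>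
        (F vk \<delta> \<le> 0 \<and> F u \<delta> \<le> 0 \<and> F w \<delta> \<le> 0 \<and> F vt \<delta> \<le> 0)"
      using vertices unfolding F_def by (cases "0 \<le> \<sigma>") (auto simp: zero_le_mult_iff mult_le_0_iff)
    then show "(0 \<le> det2 \<gamma> \<delta> * det2 \<gamma> \<alpha> \<and> 0 \<le> det2 \<delta> \<alpha> * det2 \<gamma> \<alpha>) \<or>
        (det2 \<gamma> \<delta> * det2 \<gamma> \<alpha> < 0 \<and> det2 \<delta> \<alpha> * det2 \<gamma> \<alpha> < 0)"
      by (rule P.dichotomy)
  qed (use P.det_nonzero box in auto)
  show ?thesis
  proof (intro ballI)
    fix \<delta> y assume \<delta>: "\<delta> \<in> {la..ha} \<times> {lb..hb}" and y: "y \<in> \<Delta>"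
    have "\<exists>x\<in>\<Delta>. 0 < F x \<delta>"
    proof (cases "\<delta> = 0")
      case True
      then show ?thesis using P.beyond(1) vertices(1) by blast
    next
      case False
      then have "0 < F u \<delta> \<or> 0 < F w \<delta>" using P.positive_off_pivot C.in_cone[OF \<delta>] by blast
      then show ?thesis using vertices(2,3) by blast
    qed
    then obtain x where "x \<in> \<Delta>" "0 < \<sigma> * (inner (Q \<delta>) x - 1)" unfolding F_def by blast
    then show "0 \<le> \<sigma> * (inner (Q \<delta>) y - 1)"
      using one_sided_spread[OF bspec[OF one_sided \<delta>]] y by blast
  qed
qed

section \<open>Regions of an arrangement of lines\<close>

lemma line_of_inner: "line_of P = {q. inner P q = 1}"
  by (auto simp: line_of_def inner_prod_def)

lemma closed_lines:
  assumes "finite S"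
  shows "closed (\<Union>P\<in>S. line_of P)"
  using assms by (intro closed_UN) (auto simp: line_of_inner closed_hyperplane)

lemma off_lines_in_component:
  fixes S :: "(real \<times> real) set"
  defines "L \<equiv> \<Union>P\<in>S. line_of P"
  assumes "finite S" and x: "x \<in> closure (connected_component_set (- L) z)" "x \<notin> L"
  shows "x \<in> connected_component_set (- L) z"
proof -
  have "open (- L)" unfolding L_def by (rule open_Compl[OF closed_lines[OF assms(2)]])
  then obtain \<epsilon> where "0 < \<epsilon>" and ball: "ball x \<epsilon> \<subseteq> - L"
    using x(2) open_contains_ball by blast
  then obtain y where y: "y \<in> connected_component_set (- L) z" "dist y x < \<epsilon>"
    using x(1) closure_approachable by blast
  have "ball x \<epsilon> \<subseteq> connected_component_set (- L) y"
    using y(2) ball by (intro connected_component_maximal) (auto simp: dist_commute)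
  also have "\<dots> = connected_component_set (- L) z"
    using y(1) by (simp add: connected_component_eq)
  finally show ?thesis using \<open>0 < \<epsilon>\<close> centre_in_ball by blast
qed

lemma region_interior_off_lines:
  assumes "finite S" "region_of S \<Delta>" "x \<in> \<Delta>" "x \<notin> (\<Union>P\<in>S. line_of P)"
  shows "x \<in> interior \<Delta>"
proof -
  obtain z where \<Delta>: "\<Delta> = closure (connected_component_set (- (\<Union>P\<in>S. line_of P)) z)"
    using assms(2) unfolding region_of_def by blast
  have "open (connected_component_set (- (\<Union>P\<in>S. line_of P)) z)"
    by (intro open_connected_component open_Compl closed_lines assms(1))
  moreover have "x \<in> connected_component_set (- (\<Union>P\<in>S. line_of P)) z"
    using off_lines_in_component assms \<Delta> by blast
  ultimately show ?thesis
    unfolding \<Delta> using interior_maximal[OF closure_subset] by blast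
qed

lemma region_contains_convex:
  assumes "finite S" "region_of S \<Delta>" "convex H" "H \<inter> (\<Union>P\<in>S. line_of P) = {}" "x \<in> H" "x \<in> \<Delta>"
  shows "H \<subseteq> \<Delta>"
proof -
  define L where "L = (\<Union>P\<in>S. line_of P)"
  obtain z where \<Delta>: "\<Delta> = closure (connected_component_set (- L) z)"
    using assms(2) unfolding region_of_def L_def by blast
  have "x \<in> connected_component_set (- L) z"
    using off_lines_in_component assms \<Delta> unfolding L_def by blast
  then have "connected_component_set (- L) x = connected_component_set (- L) z"
    by (simp add: connected_component_eq)
  moreover have "H \<subseteq> connected_component_set (- L) x"
    using assms(3-5) unfolding L_def by (intro connected_component_maximal convex_connected) auto
  ultimately show ?thesis unfolding \<Delta> using closure_subset by blast
qed

lemma region_one_sided: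
  assumes "region_of S \<Delta>" "Q \<in> S"
  shows "(\<forall>x\<in>\<Delta>. 1 \<le> inner Q x) \<or> (\<forall>x\<in>\<Delta>. inner Q x \<le> 1)"
proof -
  obtain z where \<Delta>: "\<Delta> = closure (connected_component_set (- (\<Union>P\<in>S. line_of P)) z)"
    using assms(1) unfolding region_of_def by blast
  define C where "C = connected_component_set (- (\<Union>P\<in>S. line_of P)) z"
  have "C \<subseteq> {x. inner Q x < 1} \<union> {x. 1 < inner Q x}"
    using assms(2) connected_component_subset unfolding C_def line_of_inner by fastforce
  then have "{x. inner Q x < 1} \<inter> C = {} \<or> {x. 1 < inner Q x} \<inter> C = {}"
    by (intro connectedD) (auto simp: C_def open_halfspace_lt open_halfspace_gt)
  moreover have "{x. 1 \<le> inner Q x} = - {x. inner Q x < 1}" "{x. inner Q x \<le> 1} = - {x. 1 < inner Q x}"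
    by auto
  ultimately have "C \<subseteq> {x. 1 \<le> inner Q x} \<or> C \<subseteq> {x. inner Q x \<le> 1}"
    by blast
  then have "\<Delta> \<subseteq> {x. 1 \<le> inner Q x} \<or> \<Delta> \<subseteq> {x. inner Q x \<le> 1}"
    unfolding \<Delta> C_def[symmetric] using closure_minimal closed_halfspace_ge closed_halfspace_le by metis
  then show ?thesis by blast
qed

lemma region_contains_strict_side:
  assumes "finite S" "region_of S \<Delta>" "\<sigma> \<noteq> 0"
    and one_sided: "\<forall>Q\<in>S. \<forall>x\<in>\<Delta>. 0 \<le> \<sigma> * (inner Q x - 1)"
  obtains z where "\<forall>Q\<in>S. 0 < \<sigma> * (inner Q z - 1)" "{x. \<forall>Q\<in>S. 0 < \<sigma> * (inner Q x - 1)} \<subseteq> \<Delta>"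
proof -
  obtain z where z: "z \<notin> (\<Union>P\<in>S. line_of P)"
    and \<Delta>: "\<Delta> = closure (connected_component_set (- (\<Union>P\<in>S. line_of P)) z)"
    using assms(2) unfolding region_of_def by blast
  define H where "H = {x. \<forall>Q\<in>S. 0 < \<sigma> * (inner Q x - 1)}"
  have "z \<in> \<Delta>" unfolding \<Delta> by (rule closure_subset[THEN subsetD]) (use z in auto)
  have "z \<in> H" unfolding H_def
  proof (intro CollectI ballI)
    fix Q assume "Q \<in> S"
    then have "inner Q z \<noteq> 1" "0 \<le> \<sigma> * (inner Q z - 1)"
      using z one_sided \<open>z \<in> \<Delta>\<close> by (auto simp: line_of_inner)
    then show "0 < \<sigma> * (inner Q z - 1)" using assms(3) by (simp add: order_le_less)
  qed
  have "H = (\<Inter>Q\<in>S. {x. \<sigma> < inner (\<sigma> *\<^sub>R Q) x})"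
    unfolding H_def by (auto simp: right_diff_distrib)
  then have "convex H" by (simp only:) (intro convex_INT ballI convex_halfspace_gt)
  moreover have "H \<inter> (\<Union>P\<in>S. line_of P) = {}" unfolding H_def line_of_inner by auto
  ultimately have "H \<subseteq> \<Delta>"
    using region_contains_convex[OF assms(1,2)] \<open>z \<in> H\<close> \<open>z \<in> \<Delta>\<close> by blast
  then show ?thesis using that \<open>z \<in> H\<close> unfolding H_def by blast
qed

lemma unbounded_ray:
  fixes z :: "'a::real_normed_vector"
  assumes "z \<noteq> 0" "\<forall>t\<ge>1. t *\<^sub>R z \<in> A"
  shows "\<not> bounded A"
proof
  assume "bounded A"
  then obtain b where "0 < b" and bound: "\<forall>x\<in>A. norm x \<le> b" by (auto simp: bounded_pos)
  then have "(b / norm z + 1) *\<^sub>R z \<in> A" using assms(2) by simp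
  then have "norm ((b / norm z + 1) *\<^sub>R z) \<le> b" using bound by blast
  moreover have "norm ((b / norm z + 1) *\<^sub>R z) = b + norm z"
    using assms(1) \<open>0 < b\<close> by (simp add: distrib_right)
  ultimately show False using assms(1) by simp
qed

lemma one_sided_region_contains_origin:
  assumes "finite S" "S \<noteq> {}" "region_of S \<Delta>" "bounded \<Delta>" "\<sigma> \<noteq> 0"
    and one_sided: "\<forall>Q\<in>S. \<forall>x\<in>\<Delta>. 0 \<le> \<sigma> * (inner Q x - 1)"
  shows "(0, 0) \<in> \<Delta>"
proof -
  obtain z where z: "\<forall>Q\<in>S. 0 < \<sigma> * (inner Q z - 1)"
    and H: "{x. \<forall>Q\<in>S. 0 < \<sigma> * (inner Q x - 1)} \<subseteq> \<Delta>"
    using region_contains_strict_side[OF assms(1,3,5) one_sided] by blast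
  show ?thesis
  proof (cases "\<sigma> < 0")
    case True
    then have "(0, 0) \<in> {x. \<forall>Q\<in>S. 0 < \<sigma> * (inner Q x - 1)}" by (simp add: inner_prod_def)
    then show ?thesis using H by blast
  next
    case False
    then have "0 < \<sigma>" using assms(5) by simp
    then have beyond: "1 < inner Q z" if "Q \<in> S" for Q
      using z that by (simp add: zero_less_mult_iff)
    have "t *\<^sub>R z \<in> \<Delta>" if "1 \<le> t" for t
    proof -
      have "1 < t * inner Q z" if "Q \<in> S" for Q
        using beyond[OF that] \<open>1 \<le> t\<close> by (smt (verit) mult_le_cancel_right1)
      then have "t *\<^sub>R z \<in> {x. \<forall>Q\<in>S. 0 < \<sigma> * (inner Q x - 1)}" using \<open>0 < \<sigma>\<close> by simp
      then show ?thesis using H by blast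
    qed
    moreover have "z \<noteq> 0" using beyond assms(2) by fastforce
    ultimately show ?thesis using unbounded_ray assms(4) by blast
  qed
qed

section \<open>Convex polygons with clockwise vertices\<close>

fun sign_of :: "lr \<Rightarrow> real" where
  "sign_of l = 1"
| "sign_of r = -1"

lemma mod_add_neq:
  fixes k i j n :: nat
  assumes "i < j" "j < i + n"
  shows "(k + i) mod n \<noteq> (k + j) mod n"
proof
  assume "(k + i) mod n = (k + j) mod n"
  then have "n dvd (k + j) - (k + i)" using mod_eq_dvd_iff_nat[of "k + i" "k + j" n] assms(1) by simp
  then have "n dvd j - i" by simp
  then show False using assms by (auto dest: dvd_imp_le)
qed

lemma cross2_inner: "cross2 d (y - a) = inner (- snd d, fst d) y - inner (- snd d, fst d) a"
  by (simp add: cross2_def inner_prod_def algebra_simps)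

lemma clockwise_vertex_in:
  assumes "clockwise_vertices \<Delta> n v"
  shows "v (k mod n) \<in> \<Delta>"
proof -
  have "0 < n" using assms by (simp add: clockwise_vertices_def)
  then show ?thesis using assms unfolding clockwise_vertices_def by (auto intro: hull_inc)
qed

lemma clockwise_edge_strict:
  assumes "clockwise_vertices \<Delta> n v" "j mod n \<noteq> k mod n" "j mod n \<noteq> (k + 1) mod n"
  shows "cross2 (v ((k + 1) mod n) - v (k mod n)) (v (j mod n) - v (k mod n)) < 0"
proof -
  have "0 < n" and cw: "\<forall>k<n. \<forall>j<n. j \<noteq> k \<and> j \<noteq> (k + 1) mod n \<longrightarrow>
      cross2 (v ((k + 1) mod n) - v k) (v j - v k) < 0"
    using assms(1) by (auto simp: clockwise_vertices_def)
  moreover have "(k mod n + 1) mod n = (k + 1) mod n" by (simp add: mod_Suc_eq)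
  ultimately show ?thesis using assms(2,3) by (metis mod_less_divisor)
qed

lemma clockwise_edge_distinct:
  assumes "clockwise_vertices \<Delta> n v"
  shows "v (k mod n) \<noteq> v ((k + 1) mod n)"
proof -
  have "3 \<le> n" using assms by (simp add: clockwise_vertices_def)
  then have "cross2 (v ((k + 1) mod n) - v (k mod n)) (v ((k + 2) mod n) - v (k mod n)) < 0"
    using clockwise_edge_strict[OF assms, of "k + 2" k] mod_add_neq[of 0 2 n k] mod_add_neq[of 1 2 n k]
    by simp
  then show ?thesis by (auto simp: cross2_def)
qed

lemma clockwise_edge_halfplane:
  assumes "clockwise_vertices \<Delta> n v" "y \<in> \<Delta>"
  shows "cross2 (v ((k + 1) mod n) - v (k mod n)) (y - v (k mod n)) \<le> 0"
proof -
  define a where "a = v (k mod n)"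
  define b where "b = v ((k + 1) mod n)"
  have "v ` {..<n} \<subseteq> {y. cross2 (b - a) (y - a) \<le> 0}"
  proof (rule image_subsetI)
    fix j assume "j \<in> {..<n}"
    then have "v j = v (j mod n)" by simp
    then show "v j \<in> {y. cross2 (b - a) (y - a) \<le> 0}"
      using clockwise_edge_strict[OF assms(1), of j k] unfolding a_def b_def
      by (cases "j mod n = k mod n \<or> j mod n = (k + 1) mod n") (auto simp: cross2_def)
  qed
  then have "convex hull (v ` {..<n}) \<subseteq> {y. cross2 (b - a) (y - a) \<le> 0}"
    unfolding cross2_inner diff_le_0_iff_le by (rule hull_minimal) (rule convex_halfspace_le)
  then show ?thesis using assms unfolding a_def b_def clockwise_vertices_def by blast
qed

lemma clockwise_edge_not_interior:
  assumes cw: "clockwise_vertices \<Delta> n v" and x: "x \<in> open_segment (v (k mod n)) (v ((k + 1) mod n))"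
  shows "x \<notin> interior \<Delta>"
proof -
  define a where "a = v (k mod n)"
  define b where "b = v ((k + 1) mod n)"
  define N where "N = (- snd (b - a), fst (b - a))"
  have "N \<noteq> 0" using clockwise_edge_distinct[OF cw] unfolding N_def a_def b_def by (auto simp: prod_eq_iff)
  have "\<Delta> \<subseteq> {y. inner N y \<le> inner N a}"
  proof
    fix y assume "y \<in> \<Delta>"
    then have "cross2 (b - a) (y - a) \<le> 0"
      using clockwise_edge_halfplane[OF cw] unfolding a_def b_def by blast
    then show "y \<in> {y. inner N y \<le> inner N a}" unfolding cross2_inner N_def by simp
  qed
  then have int: "interior \<Delta> \<subseteq> {y. inner N y < inner N a}"
    using interior_mono interior_halfspace_le[OF \<open>N \<noteq> 0\<close>] by blast
  obtain u where xu: "x = (1 - u) *\<^sub>R a + u *\<^sub>R b"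
    using x unfolding a_def b_def by (auto simp: in_segment)
  have "inner N x = (1 - u) * inner N a + u * inner N b"
    unfolding xu by (simp add: inner_add_right)
  also have "\<dots> = inner N a" unfolding N_def by (simp add: inner_prod_def algebra_simps)
  finally show ?thesis using int by auto
qed

lemma line_through_open_segment:
  fixes a b :: "real \<times> real"
  assumes "finite S" "a \<noteq> b" "open_segment a b \<subseteq> (\<Union>P\<in>S. line_of P)"
  shows "\<exists>P\<in>S. inner P a = 1 \<and> inner P b = 1"
proof -
  have "\<exists>P\<in>S. infinite (open_segment a b \<inter> line_of P)"
  proof (rule ccontr)
    assume "\<not> ?thesis"
    then have "finite (\<Union>P\<in>S. open_segment a b \<inter> line_of P)" using assms(1) by blast
    moreover have "open_segment a b \<subseteq> (\<Union>P\<in>S. open_segment a b \<inter> line_of P)" using assms(3) by blast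
    ultimately have "finite (open_segment a b)" by (rule finite_subset[rotated])
    then show False using assms(2) by simp
  qed
  then obtain P where P: "P \<in> S" and inf: "infinite (open_segment a b \<inter> line_of P)" by blast
  then obtain x where x: "x \<in> open_segment a b \<inter> line_of P"
    by (metis ex_in_conv finite.emptyI)
  have "\<not> open_segment a b \<inter> line_of P \<subseteq> {x}"
    using inf finite_subset by blast
  then obtain y where y: "y \<in> open_segment a b \<inter> line_of P" "y \<noteq> x" by blast
  obtain s t where s: "x = (1 - s) *\<^sub>R a + s *\<^sub>R b" and t: "y = (1 - t) *\<^sub>R a + t *\<^sub>R b"
    using x y(1) by (auto simp: in_segment)
  have e: "(1 - s) * inner P a + s * inner P b = 1" "(1 - t) * inner P a + t * inner P b = 1"
    using x y(1) unfolding s t line_of_inner by (simp_all add: inner_add_right)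
  have "(s - t) * (inner P b - inner P a) =
      ((1 - s) * inner P a + s * inner P b) - ((1 - t) * inner P a + t * inner P b)"
    by (simp add: algebra_simps)
  also have "\<dots> = 0" using e by simp
  finally have "inner P a = inner P b" using s t y(2) by auto
  then show ?thesis using P e(1) by (auto simp: algebra_simps)
qed

lemma clockwise_edge_on_line:
  assumes S: "finite S" "region_of S \<Delta>" and cw: "clockwise_vertices \<Delta> n v"
  shows "\<exists>P\<in>S. inner P (v (k mod n)) = 1 \<and> inner P (v ((k + 1) mod n)) = 1"
proof (rule line_through_open_segment[OF S(1) clockwise_edge_distinct[OF cw]])
  have "convex \<Delta>" using cw by (simp add: clockwise_vertices_def)
  then have "open_segment (v (k mod n)) (v ((k + 1) mod n)) \<subseteq> \<Delta>"
    using clockwise_vertex_in[OF cw] convex_contains_open_segment by blast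
  then show "open_segment (v (k mod n)) (v ((k + 1) mod n)) \<subseteq> (\<Union>P\<in>S. line_of P)"
    using clockwise_edge_not_interior[OF cw] region_interior_off_lines[OF S] by blast
qed

lemma line_cross:
  fixes P a b y :: "real \<times> real"
  assumes "inner P a = 1" "inner P b = 1"
  shows "cross2 (b - a) ((0, 0) - a) * (inner P y - 1) = - cross2 (b - a) (y - a)"
proof -
  obtain p1 p2 a1 a2 b1 b2 y1 y2 where *: "P = (p1, p2)" "a = (a1, a2)" "b = (b1, b2)" "y = (y1, y2)"
    by (metis prod.exhaust)
  have "p1 * a1 + p2 * a2 = 1" "p1 * b1 + p2 * b2 = 1"
    using assms unfolding * by (simp_all add: inner_prod_def)
  then have "((b2 - a2) * a1 - (b1 - a1) * a2) * (p1 * y1 + p2 * y2 - 1) =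
      (b2 - a2) * (y1 - a1) - (b1 - a1) * (y2 - a2)"
    by algebra
  then show ?thesis unfolding * cross2_def by (simp add: inner_prod_def)
qed
lemma clockwise_edge_line_side:
  assumes cw: "clockwise_vertices \<Delta> n v"
    and P: "inner P (v (k mod n)) = 1" "inner P (v ((k + 1) mod n)) = 1"
  shows "y \<in> \<Delta> \<Longrightarrow> 0 \<le> sign_of (side_D n v k) * (inner P y - 1)"
    and "j mod n \<noteq> k mod n \<Longrightarrow> j mod n \<noteq> (k + 1) mod n \<Longrightarrow>
      0 < sign_of (side_D n v k) * (inner P (v (j mod n)) - 1)"
proof -
  define a where "a = v (k mod n)"
  define b where "b = v ((k + 1) mod n)"
  define c where "c = cross2 (b - a) ((0, 0) - a)"
  define \<sigma> where "\<sigma> = sign_of (side_D n v k)"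
  have \<sigma>: "\<sigma> = (if 0 < c then 1 else -1)"
    unfolding \<sigma>_def side_D_def Let_def a_def b_def c_def by simp
  have cross: "c * (inner P y - 1) = - cross2 (b - a) (y - a)" for y
    using line_cross[OF P] unfolding a_def b_def c_def .
  have "3 \<le> n" using cw by (simp add: clockwise_vertices_def)
  then have "cross2 (b - a) (v ((k + 2) mod n) - a) < 0"
    using clockwise_edge_strict[OF cw, of "k + 2" k] mod_add_neq[of 0 2 n k] mod_add_neq[of 1 2 n k]
    unfolding a_def b_def by simp
  then have "c \<noteq> 0" using cross[of "v ((k + 2) mod n)"] by auto
  then have pos: "0 < \<sigma> * c" unfolding \<sigma> by simp
  have scaled: "(\<sigma> * c) * (\<sigma> * (inner P y - 1)) = - cross2 (b - a) (y - a) * 1" for y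
  proof -
    have "\<sigma> * \<sigma> = 1" unfolding \<sigma> by simp
    then show ?thesis using cross[of y] by (metis mult.assoc mult.left_commute mult_1 mult.right_neutral)
  qed
  show "0 \<le> \<sigma> * (inner P y - 1)" if "y \<in> \<Delta>"
    using scaled_sign(2)[OF pos zero_less_one scaled[of y]] clockwise_edge_halfplane[OF cw that, of k]
    unfolding a_def b_def by linarith
  show "0 < \<sigma> * (inner P (v (j mod n)) - 1)" if "j mod n \<noteq> k mod n" "j mod n \<noteq> (k + 1) mod n"
    using scaled_sign(1)[OF pos zero_less_one scaled[of "v (j mod n)"]] clockwise_edge_strict[OF cw that]
    unfolding a_def b_def by linarith
qed

section \<open>Rectangular lattices\<close>

lemma rect_lattice_nonempty_finite:
  assumes "rect_lattice S"
  shows "S \<noteq> {}" "finite S"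
proof -
  obtain a b dx dy N M where ab: "(a, b) \<noteq> (0, 0)"
    and S: "S = {(a + real k * dx, b + real j * dy) | k j. k \<le> N \<and> j \<le> M} - {(0, 0)}"
    using assms unfolding rect_lattice_def by blast
  have "\<exists>k j. (a, b) = (a + real k * dx, b + real j * dy) \<and> k \<le> N \<and> j \<le> M"
    by (rule exI[of _ 0], rule exI[of _ 0]) simp
  then have "(a, b) \<in> S" using ab unfolding S by blast
  then show "S \<noteq> {}" by blast
  have "S \<subseteq> (\<lambda>(k, j). (a + real k * dx, b + real j * dy)) ` ({..N} \<times> {..M})"
    unfolding S by auto
  then show "finite S" by (rule finite_subset) simp
qed

lemma rect_lattice_recentred:
  assumes "rect_lattice S" "p \<in> S"
  obtains la ha lb hb :: int and dx dy :: real
  where "0 \<in> {la..ha} \<times> {lb..hb}"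
    and "S \<subseteq> (\<lambda>\<delta>. p + lattice_vec dx dy \<delta>) ` ({la..ha} \<times> {lb..hb})"
    and "(\<lambda>\<delta>. p + lattice_vec dx dy \<delta>) ` ({la..ha} \<times> {lb..hb}) \<subseteq> insert 0 S"
proof -
  obtain a b dx dy N M
    where S: "S = {(a + real k * dx, b + real j * dy) | k j. k \<le> N \<and> j \<le> M} - {(0, 0)}"
    using assms(1) unfolding rect_lattice_def by blast
  then obtain i1 j1 where ij1: "i1 \<le> N" "j1 \<le> M" "p = (a + real i1 * dx, b + real j1 * dy)"
    using assms(2) by blast
  let ?B = "{- int i1..int N - int i1} \<times> {- int j1..int M - int j1}"
  have shift: "p + lattice_vec dx dy (int k - int i1, int j - int j1) = (a + real k * dx, b + real j * dy)"
    for k j unfolding ij1(3) lattice_vec_def by (simp add: algebra_simps)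
  show ?thesis
  proof (rule that[of "- int i1" "int N - int i1" "- int j1" "int M - int j1" dx dy])
    show "0 \<in> ?B" using ij1 by (simp add: zero_prod_def)
    show "S \<subseteq> (\<lambda>\<delta>. p + lattice_vec dx dy \<delta>) ` ?B"
    proof
      fix q assume "q \<in> S"
      then obtain k j where "k \<le> N" "j \<le> M" "q = (a + real k * dx, b + real j * dy)" unfolding S by blast
      then show "q \<in> (\<lambda>\<delta>. p + lattice_vec dx dy \<delta>) ` ?B"
        using shift[of k j, symmetric] by force
    qed
    show "(\<lambda>\<delta>. p + lattice_vec dx dy \<delta>) ` ?B \<subseteq> insert 0 S"
    proof (rule image_subsetI)
      fix \<delta> assume \<delta>: "\<delta> \<in> ?B"
      define k j where "k = nat (int i1 + fst \<delta>)" and "j = nat (int j1 + snd \<delta>)"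
      have "k \<le> N" "j \<le> M" "\<delta> = (int k - int i1, int j - int j1)"
        using \<delta> unfolding k_def j_def by auto
      then have "p + lattice_vec dx dy \<delta> \<in> {(a + real k * dx, b + real j * dy) | k j. k \<le> N \<and> j \<le> M}"
        using shift by auto
      then show "p + lattice_vec dx dy \<delta> \<in> insert 0 S"
        unfolding S by (auto simp: zero_prod_def)
    qed
  qed
qed

lemma lattice_box_one_sided:
  assumes "region_of S \<Delta>" "(\<lambda>\<delta>. p + lattice_vec dx dy \<delta>) ` B \<subseteq> insert 0 S"
  shows "\<forall>\<delta>\<in>B. (\<forall>y\<in>\<Delta>. 1 \<le> inner (p + lattice_vec dx dy \<delta>) y) \<or>
    (\<forall>y\<in>\<Delta>. inner (p + lattice_vec dx dy \<delta>) y \<le> 1)"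
proof
  fix \<delta> assume "\<delta> \<in> B"
  then have "p + lattice_vec dx dy \<delta> \<in> insert 0 S" by (rule subsetD[OF assms(2) imageI])
  then show "(\<forall>y\<in>\<Delta>. 1 \<le> inner (p + lattice_vec dx dy \<delta>) y) \<or>
      (\<forall>y\<in>\<Delta>. inner (p + lattice_vec dx dy \<delta>) y \<le> 1)"
  proof
    assume "p + lattice_vec dx dy \<delta> = 0"
    then show ?thesis by simp
  qed (rule region_one_sided[OF assms(1)])
qed

section \<open>Three consecutive sides\<close>

lemma three_equal_sides_edge_lines:
  assumes S: "finite S" "region_of S \<Delta>" and cw: "clockwise_vertices \<Delta> n v"
    and same: "side_D n v (k + 1) = side_D n v k" "side_D n v (k + 2) = side_D n v k"
  defines "\<sigma> \<equiv> sign_of (side_D n v k)" and "V \<equiv> \<lambda>i. v ((k + i) mod n)"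
  obtains P0 P1 P2 where "P0 \<in> S" "P1 \<in> S" "P2 \<in> S"
    and "inner P0 (V 0) = 1" "inner P0 (V 1) = 1" "inner P1 (V 1) = 1" "inner P1 (V 2) = 1"
      "inner P2 (V 2) = 1" "inner P2 (V 3) = 1"
    and "0 < \<sigma> * (inner P1 (V 0) - 1)" "0 < \<sigma> * (inner P2 (V 1) - 1)"
      "0 < \<sigma> * (inner P0 (V 2) - 1)" "0 < \<sigma> * (inner P1 (V 3) - 1)"
proof -
  have n: "3 \<le> n" using cw by (simp add: clockwise_vertices_def)
  have edge: "\<exists>P\<in>S. inner P (V i) = 1 \<and> inner P (V (i + 1)) = 1" for i
    using clockwise_edge_on_line[OF S cw, of "k + i"] unfolding V_def by (simp add: add.assoc)
  obtain P0 where P0: "P0 \<in> S" "inner P0 (V 0) = 1" "inner P0 (V 1) = 1"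
    using edge[of 0] by auto
  obtain P1 where P1: "P1 \<in> S" "inner P1 (V 1) = 1" "inner P1 (V 2) = 1"
    using edge[of 1] by (auto simp: numeral_2_eq_2)
  obtain P2 where P2: "P2 \<in> S" "inner P2 (V 2) = 1" "inner P2 (V 3) = 1"
    using edge[of 2] by auto
  have beyond: "0 < sign_of (side_D n v (k + i)) * (inner P (V j) - 1)"
    if "inner P (V i) = 1" "inner P (V (i + 1)) = 1" "i + 1 < j" "j < i + n" for P i j
  proof -
    have "0 < sign_of (side_D n v (k + i)) * (inner P (v ((k + j) mod n)) - 1)"
    proof (rule clockwise_edge_line_side(2)[OF cw])
      show "inner P (v ((k + i) mod n)) = 1" "inner P (v ((k + i + 1) mod n)) = 1"
        using that(1,2) unfolding V_def by (simp_all add: add.assoc)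
      show "(k + j) mod n \<noteq> (k + i) mod n" "(k + j) mod n \<noteq> (k + i + 1) mod n"
        using mod_add_neq[of i j n k] mod_add_neq[of "i + 1" j n k] that(3,4)
        by (simp_all add: add.assoc)
    qed
    then show ?thesis unfolding V_def by simp
  qed
  have "k + (n + 1) = (k + 1) + n" by simp
  then have "V n = V 0" "V (n + 1) = V 1" unfolding V_def by (simp_all only: mod_add_self2) simp
  moreover have "0 < sign_of (side_D n v (k + 1)) * (inner P1 (V n) - 1)"
    "0 < sign_of (side_D n v (k + 2)) * (inner P2 (V (n + 1)) - 1)"
    "0 < sign_of (side_D n v (k + 0)) * (inner P0 (V 2) - 1)"
    "0 < sign_of (side_D n v (k + 1)) * (inner P1 (V 3) - 1)"
    using beyond[of P1 1 n] beyond[of P2 2 "n + 1"] beyond[of P0 0 2] beyond[of P1 1 3] P0 P1 P2 n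
    by (simp_all add: numeral_2_eq_2 numeral_3_eq_3)
  ultimately show ?thesis
    using that P0 P1 P2 same unfolding \<sigma>_def by simp
qed

lemma three_equal_sides_all_lines_one_sided:
  assumes lat: "rect_lattice S" and reg: "region_of S \<Delta>" and cw: "clockwise_vertices \<Delta> n v"
    and same: "side_D n v (k + 1) = side_D n v k" "side_D n v (k + 2) = side_D n v k"
  shows "\<forall>Q\<in>S. \<forall>y\<in>\<Delta>. 0 \<le> sign_of (side_D n v k) * (inner Q y - 1)"
proof -
  define \<sigma> where "\<sigma> = sign_of (side_D n v k)"
  define V where "V i = v ((k + i) mod n)" for i
  have "finite S" using rect_lattice_nonempty_finite(2)[OF lat] .
  obtain P0 P1 P2 where P: "P0 \<in> S" "P1 \<in> S" "P2 \<in> S"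
    and lines: "inner P0 (V 0) = 1" "inner P0 (V 1) = 1" "inner P1 (V 1) = 1" "inner P1 (V 2) = 1"
      "inner P2 (V 2) = 1" "inner P2 (V 3) = 1"
    and beyond: "0 < \<sigma> * (inner P1 (V 0) - 1)" "0 < \<sigma> * (inner P2 (V 1) - 1)"
      "0 < \<sigma> * (inner P0 (V 2) - 1)" "0 < \<sigma> * (inner P1 (V 3) - 1)"
    using three_equal_sides_edge_lines[OF \<open>finite S\<close> reg cw same] unfolding \<sigma>_def V_def by blast
  obtain la ha lb hb dx dy where box: "0 \<in> {la..ha} \<times> {lb..hb}"
    and lattice: "S \<subseteq> (\<lambda>\<delta>. P1 + lattice_vec dx dy \<delta>) ` ({la..ha} \<times> {lb..hb})"
      "(\<lambda>\<delta>. P1 + lattice_vec dx dy \<delta>) ` ({la..ha} \<times> {lb..hb}) \<subseteq> insert 0 S"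
    by (rule rect_lattice_recentred[OF lat P(2)])
  obtain \<alpha> where \<alpha>: "P0 = P1 + lattice_vec dx dy \<alpha>" "\<alpha> \<in> {la..ha} \<times> {lb..hb}"
    using subsetD[OF lattice(1) P(1)] by (rule imageE)
  obtain \<gamma> where \<gamma>: "P2 = P1 + lattice_vec dx dy \<gamma>" "\<gamma> \<in> {la..ha} \<times> {lb..hb}"
    using subsetD[OF lattice(1) P(3)] by (rule imageE)
  have vertex: "V i \<in> \<Delta>" for i unfolding V_def by (rule clockwise_vertex_in[OF cw])
  have "\<forall>\<delta>\<in>{la..ha} \<times> {lb..hb}. \<forall>y\<in>\<Delta>. 0 \<le> \<sigma> * (inner (P1 + lattice_vec dx dy \<delta>) y - 1)"
    by (rule lattice_lines_one_sided[OF box \<alpha>(2) \<gamma>(2) lattice_box_one_sided[OF reg lattice(2)]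
          vertex vertex vertex vertex lines[unfolded \<alpha>(1) \<gamma>(1)] beyond[unfolded \<alpha>(1) \<gamma>(1)]])
  then have "\<forall>Q\<in>S. \<forall>y\<in>\<Delta>. 0 \<le> \<sigma> * (inner Q y - 1)"
    using lattice(1) by (auto simp: subset_eq)
  then show ?thesis unfolding \<sigma>_def .
qed

theorem lemma4p2:
  fixes S \<Delta> :: "(real \<times> real) set" and n :: nat and v :: "nat \<Rightarrow> real \<times> real"
  assumes "rect_lattice S"
    and "region_of S \<Delta>"
    and "bounded \<Delta>"
    and "(0, 0) \<notin> \<Delta>"
    and "clockwise_vertices \<Delta> n v"
  shows "\<not> (\<exists>k. side_D n v k = side_D n v (k + 1) \<and> side_D n v (k + 1) = side_D n v (k + 2))"
proof
  assume "\<exists>k. side_D n v k = side_D n v (k + 1) \<and> side_D n v (k + 1) = side_D n v (k + 2)"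
  then obtain k where "side_D n v k = side_D n v (k + 1)" "side_D n v (k + 1) = side_D n v (k + 2)"
    by blast
  then have "side_D n v (k + 1) = side_D n v k" "side_D n v (k + 2) = side_D n v k"
    by simp_all
  then have "\<forall>Q\<in>S. \<forall>y\<in>\<Delta>. 0 \<le> sign_of (side_D n v k) * (inner Q y - 1)"
    by (rule three_equal_sides_all_lines_one_sided[OF assms(1,2,5)])
  moreover have "S \<noteq> {}" "finite S" using rect_lattice_nonempty_finite[OF assms(1)] .
  moreover have "sign_of (side_D n v k) \<noteq> 0" by (cases "side_D n v k") simp_all
  ultimately have "(0, 0) \<in> \<Delta>" using one_sided_region_contains_origin assms(2,3) by blast
  then show False using assms(4) by simp
qed

end
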